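(* Let $n$ and $s$ be integers with $2\le s\le n$ and $n\geq 4$. Then $\kappa_s^*(K_n)=n-\lceil s/2\rceil$, where $K_n$ is the complete graph on $n$ vertices.
   Context: For $S\subseteq V(G)$ with $|S|\ge 2$, an $S$-Steiner tree of $G$ is a subtree $T$ of $G$ with $S\subseteq V(T)$ all of whose leaves belong to $S$. A family of $S$-Steiner trees $T_1,\dots,T_k$ is completely independent if for all $1\le p<q\le k$: $E(T_p)\cap E(T_q)=\emptyset$, $V(T_p)\cap V(T_q)=S$, and for any two vertices $x_1,x_2\in S$ the $(x_1,x_2)$-paths in $T_p$ and in $T_q$ are internally disjoint. $\kappa^*_G(S)$ is the maximum number of trees in a completely independent family of $S$-Steiner trees in $G$, and $\kappa_s^*(G)=\min\{\kappa^*_G(S): S\subseteq V(G),\ |S|=s\}$. *)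

theory Defs
  imports Complex_Main
begin

text \<open>Graphs are given by a vertex set V and a set E of 2-element edge sets.
A subgraph/tree is a pair (W, F) of a vertex set and an edge set.\<close>

definition is_path :: "'a set \<Rightarrow> 'a set set \<Rightarrow> 'a \<Rightarrow> 'a \<Rightarrow> 'a list \<Rightarrow> bool" where
  "is_path W F x y xs \<longleftrightarrow> xs \<noteq> [] \<and> hd xs = x \<and> last xs = y \<and> distinct xs \<and>
     set xs \<subseteq> W \<and> (\<forall>i. Suc i < length xs \<longrightarrow> {xs ! i, xs ! Suc i} \<in> F)"

definition is_cycle :: "'a set \<Rightarrow> 'a set set \<Rightarrow> 'a list \<Rightarrow> bool" where
  "is_cycle W F xs \<longleftrightarrow> length xs \<ge> 3 \<and> distinct xs \<and> set xs \<subseteq> W \<and>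
     (\<forall>i. Suc i < length xs \<longrightarrow> {xs ! i, xs ! Suc i} \<in> F) \<and> {last xs, hd xs} \<in> F"

definition is_tree :: "'a set \<Rightarrow> 'a set set \<Rightarrow> bool" where
  "is_tree W F \<longleftrightarrow> finite W \<and> W \<noteq> {} \<and> (\<forall>e\<in>F. card e = 2 \<and> e \<subseteq> W) \<and>
     (\<forall>x\<in>W. \<forall>y\<in>W. \<exists>xs. is_path W F x y xs) \<and> \<not> (\<exists>xs. is_cycle W F xs)"

definition tree_degree :: "'a set set \<Rightarrow> 'a \<Rightarrow> nat" where
  "tree_degree F v = card {e \<in> F. v \<in> e}"

definition steiner_tree :: "'a set \<Rightarrow> 'a set set \<Rightarrow> 'a set \<Rightarrow> 'a set \<times> 'a set set \<Rightarrow> bool" where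
  "steiner_tree V E S T \<longleftrightarrow> fst T \<subseteq> V \<and> snd T \<subseteq> E \<and> is_tree (fst T) (snd T) \<and>
     S \<subseteq> fst T \<and> (\<forall>v\<in>fst T. tree_degree (snd T) v = 1 \<longrightarrow> v \<in> S)"

definition interior :: "'a list \<Rightarrow> 'a set" where
  "interior xs = set (butlast (tl xs))"

definition cis_family ::
  "'a set \<Rightarrow> 'a set set \<Rightarrow> 'a set \<Rightarrow> nat \<Rightarrow> (nat \<Rightarrow> 'a set \<times> 'a set set) \<Rightarrow> bool" where
  "cis_family V E S k T \<longleftrightarrow> (\<forall>i<k. steiner_tree V E S (T i)) \<and>
     (\<forall>p q. p < q \<and> q < k \<longrightarrow>
        snd (T p) \<inter> snd (T q) = {} \<and> fst (T p) \<inter> fst (T q) = S \<and>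
        (\<forall>x1\<in>S. \<forall>x2\<in>S. \<forall>P Q. is_path (fst (T p)) (snd (T p)) x1 x2 P \<and>
             is_path (fst (T q)) (snd (T q)) x1 x2 Q \<longrightarrow> interior P \<inter> interior Q = {}))"

definition kappa_star :: "'a set \<Rightarrow> 'a set set \<Rightarrow> 'a set \<Rightarrow> nat" where
  "kappa_star V E S = Max {k. \<exists>T. cis_family V E S k T}"

definition kappa_s :: "'a set \<Rightarrow> 'a set set \<Rightarrow> nat \<Rightarrow> nat" where
  "kappa_s V E s = Min {kappa_star V E S | S. S \<subseteq> V \<and> card S = s}"

definition Kn_V :: "nat \<Rightarrow> nat set" where
  "Kn_V n = {..<n}"

definition Kn_E :: "nat \<Rightarrow> nat set set" where
  "Kn_E n = {{u, v} | u v. u < n \<and> v < n \<and> u \<noteq> v}"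

end

theory Submission
  imports Defs
begin

(* Upper bound: a tree of a completely independent family either has a
   vertex outside S, and distinct trees have distinct such vertices, or it is a spanning tree of S
   with s - 1 of the s (s - 1) / 2 edges on S; as the trees are edge-disjoint, there are at most
   n - s trees of the first kind and s div 2 of the second.
   Lower bound: take the stars joining each of the n - s outside vertices to S, and s div 2
   edge-disjoint spanning double stars on S. The inner vertices of a path in a tree have degree at
   least 2, so they lie in the centre of the star or double star; since these centres are pairwise
   disjoint, the trees are completely independent. *)

definition walk :: "'a set \<Rightarrow> 'a set set \<Rightarrow> 'a list \<Rightarrow> bool" where
  "walk W F xs \<longleftrightarrow> xs \<noteq> [] \<and> set xs \<subseteq> W \<and> successively (\<lambda>x y. {x, y} \<in> F) xs"

lemma is_path_iff_walk:
  "is_path W F x y xs \<longleftrightarrow> walk W F xs \<and> hd xs = x \<and> last xs = y \<and> distinct xs"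
  by (auto simp: is_path_def walk_def successively_conv_nth)

lemma walk_rev: "walk W F xs \<Longrightarrow> walk W F (rev xs)"
  by (simp add: walk_def insert_commute)

lemma walk_map:
  assumes "walk W F xs"
  shows "walk (f ` W) ((`) f ` F) (map f xs)"
proof -
  have "{f x, f y} \<in> (`) f ` F" if "{x, y} \<in> F" for x y
    using image_eqI[OF _ that, of "{f x, f y}" "(`) f"] by simp
  then show ?thesis
    using assms by (auto simp: walk_def successively_map elim!: successively_mono)
qed

lemma walk_join:
  assumes "walk W F xs" "walk W F ys" "last xs = hd ys"
  shows "walk W F (xs @ tl ys)"
  using assms by (cases ys) (auto simp: walk_def successively_append_iff successively_Cons)

lemma walk_butlast:
  assumes "walk W F xs" "2 \<le> length xs"
  shows "walk W F (butlast xs)" "{last (butlast xs), last xs} \<in> F"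
proof -
  obtain ys y where xs: "xs = ys @ [y]" and "ys \<noteq> []"
    using assms(2) by (cases xs rule: rev_cases) (auto simp: Suc_le_eq)
  then show "walk W F (butlast xs)" "{last (butlast xs), last xs} \<in> F"
    using assms(1) by (auto simp: walk_def successively_append_iff)
qed

lemma walk_imp_path: "walk W F xs \<Longrightarrow> \<exists>ys. is_path W F (hd xs) (last xs) ys"
proof (induction xs)
  case Nil
  then show ?case by (simp add: walk_def)
next
  case (Cons x xs)
  show ?case
  proof (cases "xs = []")
    case True
    then show ?thesis using Cons.prems by (auto simp: is_path_iff_walk intro!: exI[of _ "[x]"])
  next
    case False
    then have x: "x \<in> W" "{x, hd xs} \<in> F" and "walk W F xs"
      using Cons.prems by (auto simp: walk_def successively_Cons)
    then obtain ys where ys: "is_path W F (hd xs) (last xs) ys"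
      using Cons.IH by blast
    show ?thesis
    proof (cases "x \<in> set ys")
      case True
      then obtain us vs where "ys = us @ x # vs"
        by (meson split_list)
      then show ?thesis
        using ys False by (intro exI[of _ "x # vs"]) (auto simp: is_path_iff_walk walk_def successively_append_iff)
    next
      case False
      then show ?thesis
        using ys x \<open>xs \<noteq> []\<close> by (intro exI[of _ "x # ys"]) (auto simp: is_path_iff_walk walk_def successively_Cons)
    qed
  qed
qed

lemma ex_path_if_walks_to:
  assumes walks: "\<forall>x\<in>W. \<exists>p. walk W F p \<and> hd p = x \<and> last p = c"
    and "x \<in> W" "y \<in> W"
  shows "\<exists>xs. is_path W F x y xs"
proof -
  obtain p q where p: "walk W F p" "hd p = x" "last p = c" and q: "walk W F q" "hd q = y" "last q = c"
    using walks \<open>x \<in> W\<close> \<open>y \<in> W\<close> by blast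
  obtain qs where rq: "rev q = c # qs"
    using q by (cases "rev q") (auto simp: walk_def hd_rev[symmetric])
  have "walk W F (p @ qs)"
    using walk_join[OF p(1) walk_rev[OF q(1)]] p rq by simp
  moreover have "hd (p @ qs) = x"
    using p by (simp add: walk_def)
  moreover have "last (p @ qs) = last (rev q)"
    using p rq by (cases qs) (auto simp: walk_def)
  ultimately have "walk W F (p @ qs) \<and> hd (p @ qs) = x \<and> last (p @ qs) = y"
    using q by (simp add: last_rev)
  then show ?thesis
    by (metis walk_imp_path)
qed

lemma ex_parent_decreasing:
  assumes walks: "\<forall>w\<in>W. \<exists>p. walk W F p \<and> hd p = r \<and> last p = w"
  shows "\<exists>parent (d :: 'a \<Rightarrow> nat). \<forall>w\<in>W - {r}. {parent w, w} \<in> F \<and> d (parent w) < d w"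
proof -
  define d where "d w = (LEAST l. \<exists>p. walk W F p \<and> hd p = r \<and> last p = w \<and> length p = l)" for w
  have "\<exists>u. {u, w} \<in> F \<and> d u < d w" if w: "w \<in> W - {r}" for w
  proof -
    have "\<exists>l p. walk W F p \<and> hd p = r \<and> last p = w \<and> length p = l"
      using walks w by blast
    then have "\<exists>p. walk W F p \<and> hd p = r \<and> last p = w \<and> length p = d w"
      unfolding d_def by (rule LeastI_ex)
    then obtain p where p: "walk W F p" "hd p = r" "last p = w" "length p = d w"
      by blast
    have "length p \<noteq> 1"
      using p w by (auto simp: length_Suc_conv)
    moreover have "length p \<noteq> 0"
      using p(1) by (simp add: walk_def)
    ultimately have "2 \<le> length p"
      by linarith
    then have "walk W F (butlast p)" "{last (butlast p), w} \<in> F"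
      using walk_butlast[OF p(1)] p(3) by auto
    moreover have "hd (butlast p) = r"
      using \<open>2 \<le> length p\<close> p(2) by (cases p) auto
    ultimately have "d (last (butlast p)) \<le> length (butlast p)"
      unfolding d_def by (intro Least_le) blast
    also have "\<dots> < d w"
      using p(4) \<open>2 \<le> length p\<close> by simp
    finally show ?thesis
      using \<open>{last (butlast p), w} \<in> F\<close> by blast
  qed
  then obtain parent where "\<forall>w\<in>W - {r}. {parent w, w} \<in> F \<and> d (parent w) < d w"
    using bchoice[of "W - {r}" "\<lambda>w u. {u, w} \<in> F \<and> d u < d w"] by blast
  then show ?thesis
    by blast
qed

lemma card_le_Suc_card_edges_if_connected:
  assumes "finite F" and conn: "\<forall>x\<in>W. \<forall>y\<in>W. \<exists>xs. is_path W F x y xs"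
  shows "card W \<le> Suc (card F)"
proof (cases "W = {}")
  case False
  then obtain r where r: "r \<in> W"
    by blast
  then have "\<forall>w\<in>W. \<exists>p. walk W F p \<and> hd p = r \<and> last p = w"
    using conn by (auto simp: is_path_iff_walk)
  then obtain parent and d :: "'a \<Rightarrow> nat"
    where parent: "\<forall>w\<in>W - {r}. {parent w, w} \<in> F \<and> d (parent w) < d w"
    using ex_parent_decreasing[of W F r] by blast
  have "inj_on (\<lambda>w. {parent w, w}) (W - {r})"
  proof (rule inj_onI)
    fix v w assume v: "v \<in> W - {r}" and w: "w \<in> W - {r}" and eq: "{parent v, v} = {parent w, w}"
    show "v = w"
    proof (rule ccontr)
      assume "v \<noteq> w"
      then have "parent v = w" "parent w = v"
        using eq by (auto simp: doubleton_eq_iff)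
      then show False
        using parent[rule_format, OF v] parent[rule_format, OF w] by simp
    qed
  qed
  then have "card (W - {r}) \<le> card F"
    using parent assms(1) by (intro card_inj_on_le) auto
  then show ?thesis
    using r by (cases "finite W") (auto simp: card_Diff_singleton)
qed simp

definition branch_vertices :: "'a set set \<Rightarrow> 'a set" where
  "branch_vertices F = {a. \<exists>b c. b \<noteq> c \<and> {a, b} \<in> F \<and> {a, c} \<in> F}"

lemma interior_subset_branch_vertices:
  assumes P: "is_path W F x y P"
  shows "interior P \<subseteq> branch_vertices F"
proof
  fix z assume "z \<in> interior P"
  then obtain j where "j < length (butlast (tl P))" "z = butlast (tl P) ! j"
    unfolding interior_def by (metis in_set_conv_nth)
  then have j: "Suc (Suc j) < length P" "z = P ! Suc j"
    by (auto simp: nth_butlast nth_tl)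
  have "{P ! Suc j, P ! j} \<in> F" "{P ! Suc j, P ! Suc (Suc j)} \<in> F"
    using P j(1) unfolding is_path_def by (auto simp: insert_commute)
  moreover have "P ! j \<noteq> P ! Suc (Suc j)"
    using P j(1) unfolding is_path_def by (simp add: nth_eq_iff_index_eq)
  ultimately show "z \<in> branch_vertices F"
    using j(2) unfolding branch_vertices_def by blast
qed

lemma set_eq_hd_last_interior:
  assumes "2 \<le> length xs"
  shows "set xs = insert (hd xs) (insert (last xs) (interior xs))"
proof -
  obtain a ys where xs: "xs = a # ys" and "ys \<noteq> []"
    using assms by (cases xs) (force simp: Suc_le_eq)+
  then have "set ys = insert (last ys) (set (butlast ys))"
    by (metis append_butlast_last_id insert_is_Un set_append set_simps Un_commute)
  then show ?thesis
    using xs \<open>ys \<noteq> []\<close> by (auto simp: interior_def)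
qed

lemma set_subset_branch_vertices_if_cycle:
  assumes C: "is_cycle W F xs"
  shows "set xs \<subseteq> branch_vertices F"
proof -
  define l where "l = length xs"
  have l: "3 \<le> l" "distinct xs" and steps: "\<forall>i. Suc i < l \<longrightarrow> {xs ! i, xs ! Suc i} \<in> F"
    and close: "{last xs, hd xs} \<in> F"
    using C unfolding is_cycle_def l_def by auto
  have "xs \<noteq> []"
    using l(1) by (auto simp: l_def)
  then have hd: "hd xs = xs ! 0" and last: "last xs = xs ! (l - 1)"
    by (simp_all add: l_def hd_conv_nth last_conv_nth)
  have distinct_nth: "xs ! i \<noteq> xs ! j" if "i < l" "j < l" "i \<noteq> j" for i j
    using l(2) that by (simp add: l_def nth_eq_iff_index_eq)
  have "{xs ! 0, xs ! 1} \<in> F" "{xs ! 0, xs ! (l - 1)} \<in> F" "xs ! 1 \<noteq> xs ! (l - 1)"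
    using steps[rule_format, of 0] close distinct_nth[of 1 "l - 1"] l(1) hd last
    by (auto simp: insert_commute)
  then have "hd xs \<in> branch_vertices F"
    unfolding branch_vertices_def hd by blast
  have "{xs ! (l - 1), xs ! (l - 2)} \<in> F" "{xs ! (l - 1), xs ! 0} \<in> F" "xs ! (l - 2) \<noteq> xs ! 0"
    using steps[rule_format, of "l - 2"] close distinct_nth[of "l - 2" 0] l(1) hd last
    by (auto simp: insert_commute Suc_diff_Suc numeral_2_eq_2)
  then have "last xs \<in> branch_vertices F"
    unfolding branch_vertices_def last by blast
  moreover have "interior xs \<subseteq> branch_vertices F"
    using C by (intro interior_subset_branch_vertices[of W F "hd xs" "last xs"]) (auto simp: is_cycle_def is_path_def)
  ultimately show ?thesis
    using set_eq_hd_last_interior[of xs] l(1) \<open>hd xs \<in> branch_vertices F\<close> by (simp add: l_def)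
qed

lemma is_treeI:
  assumes "finite W" "c \<in> W" and edges: "\<forall>e\<in>F. card e = 2 \<and> e \<subseteq> W"
    and walks: "\<forall>x\<in>W. \<exists>p. walk W F p \<and> hd p = x \<and> last p = c"
    and branch: "card (branch_vertices F) \<le> 2"
  shows "is_tree W F"
proof -
  have "branch_vertices F \<subseteq> W"
    using edges unfolding branch_vertices_def by blast
  have False if "is_cycle W F xs" for xs
  proof -
    have "length xs \<le> card (branch_vertices F)"
      using set_subset_branch_vertices_if_cycle[OF that] \<open>branch_vertices F \<subseteq> W\<close> \<open>finite W\<close> that
      by (metis card_mono distinct_card finite_subset is_cycle_def)
    then show False
      using that branch by (simp add: is_cycle_def)
  qed
  then show ?thesis
    using assms ex_path_if_walks_to[OF walks] unfolding is_tree_def by blast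
qed

lemma branch_vertices_image:
  assumes "inj_on f (\<Union>F)"
  shows "branch_vertices ((`) f ` F) \<subseteq> f ` branch_vertices F"
proof
  fix a assume "a \<in> branch_vertices ((`) f ` F)"
  then obtain b c e e' where "b \<noteq> c" "e \<in> F" "e' \<in> F" "{a, b} = f ` e" "{a, c} = f ` e'"
    unfolding branch_vertices_def by auto
  have preimage: "\<exists>x y. e = {x, y} \<and> a = f x \<and> b = f y" if "e \<in> F" "{a, b} = f ` e" for e b
  proof -
    obtain x y where "x \<in> e" "y \<in> e" "a = f x" "b = f y"
      using \<open>{a, b} = f ` e\<close> by (metis imageE insertI1 insert_commute)
    moreover have "z \<in> {x, y}" if "z \<in> e" for z
      using that \<open>e \<in> F\<close> \<open>x \<in> e\<close> \<open>y \<in> e\<close> \<open>{a, b} = f ` e\<close> \<open>a = f x\<close> \<open>b = f y\<close> assms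
      by (auto dest: inj_onD)
    ultimately show ?thesis
      by blast
  qed
  obtain x y x' z where "e = {x, y}" "a = f x" "b = f y" "e' = {x', z}" "a = f x'" "c = f z"
    using preimage[OF \<open>e \<in> F\<close>] preimage[OF \<open>e' \<in> F\<close>] \<open>{a, b} = f ` e\<close> \<open>{a, c} = f ` e'\<close> by metis
  moreover have "x' = x"
    using calculation \<open>e \<in> F\<close> \<open>e' \<in> F\<close> assms by (auto dest: inj_onD)
  ultimately have "y \<noteq> z" "{x, y} \<in> F" "{x, z} \<in> F"
    using \<open>b \<noteq> c\<close> \<open>e \<in> F\<close> \<open>e' \<in> F\<close> by auto
  then show "a \<in> f ` branch_vertices F"
    using \<open>a = f x\<close> unfolding branch_vertices_def by blast
qed

lemma two_mult_card_le_if_edge_disjoint_trees: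
  assumes "finite S" "finite I" "2 \<le> card S"
    and trees: "\<forall>i\<in>I. is_tree S (F i)"
    and disjoint: "\<forall>i\<in>I. \<forall>j\<in>I. i \<noteq> j \<longrightarrow> F i \<inter> F j = {}"
  shows "2 * card I \<le> card S"
proof -
  let ?pairs = "{e. e \<subseteq> S \<and> card e = 2}"
  have "finite ?pairs"
    using \<open>finite S\<close> by (auto intro: finite_subset[of _ "Pow S"])
  have pairs: "F i \<subseteq> ?pairs" if "i \<in> I" for i
    using trees that unfolding is_tree_def by blast
  then have finite: "finite (F i)" if "i \<in> I" for i
    using that \<open>finite ?pairs\<close> finite_subset by blast
  have edge_count: "card S - 1 \<le> card (F i)" if "i \<in> I" for i
  proof -
    have "card S \<le> Suc (card (F i))"
      using trees that by (intro card_le_Suc_card_edges_if_connected[OF finite[OF that]]) (simp add: is_tree_def)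
    then show ?thesis
      by linarith
  qed
  have "card I * (card S - 1) = (\<Sum>i\<in>I. card S - 1)"
    by simp
  also have "\<dots> \<le> (\<Sum>i\<in>I. card (F i))"
    by (intro sum_mono) (rule edge_count)
  also have "\<dots> = card (\<Union>i\<in>I. F i)"
    using finite disjoint \<open>finite I\<close> by (intro card_UN_disjoint[symmetric]) auto
  also have "\<dots> \<le> card ?pairs"
    using pairs \<open>finite ?pairs\<close> by (intro card_mono) auto
  also have "\<dots> = card S * (card S - 1) div 2"
    using n_subsets[OF \<open>finite S\<close>, of 2] by (simp add: choose_two)
  finally have "(2 * card I) * (card S - 1) \<le> card S * (card S - 1)"
    by linarith
  then show ?thesis
    using \<open>2 \<le> card S\<close> by simp
qed

lemma card_supersets_meeting_in_le:
  assumes "finite V" "S \<subseteq> V"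
    and sub: "\<forall>i\<in>I. S \<subseteq> A i \<and> A i \<subseteq> V"
    and meet: "\<forall>i\<in>I. \<forall>j\<in>I. i \<noteq> j \<longrightarrow> A i \<inter> A j = S"
  shows "card {i\<in>I. A i \<noteq> S} \<le> card V - card S"
proof -
  let ?J = "{i\<in>I. A i \<noteq> S}"
  have "\<exists>v. v \<in> A i - S" if "i \<in> ?J" for i
    using sub that by blast
  then obtain outside where outside: "\<And>i. i \<in> ?J \<Longrightarrow> outside i \<in> A i - S"
    by metis
  have "inj_on outside ?J"
  proof (rule inj_onI)
    fix i j assume i: "i \<in> ?J" and j: "j \<in> ?J" and eq: "outside i = outside j"
    show "i = j"
    proof (rule ccontr)
      assume "i \<noteq> j"
      then have "A i \<inter> A j = S"
        using meet i j by blast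
      then show False
        using outside[OF i] outside[OF j] eq by auto
    qed
  qed
  moreover have "outside ` ?J \<subseteq> V - S"
    using outside sub by blast
  ultimately show ?thesis
    using card_inj_on_le[of outside ?J "V - S"] assms(1,2) by (simp add: card_Diff_subset finite_subset)
qed

lemma cis_family_le:
  assumes "finite V" "S \<subseteq> V" "2 \<le> card S" and cis: "cis_family V E S k T"
  shows "k \<le> (card V - card S) + card S div 2"
proof -
  have steiner: "steiner_tree V E S (T i)" if "i < k" for i
    using cis that unfolding cis_family_def by blast
  have ordered: "snd (T p) \<inter> snd (T q) = {} \<and> fst (T p) \<inter> fst (T q) = S" if "p < q" "q < k" for p q
    using cis that unfolding cis_family_def by simp
  have disjoint: "snd (T p) \<inter> snd (T q) = {} \<and> fst (T p) \<inter> fst (T q) = S"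
    if "p < k" "q < k" "p \<noteq> q" for p q
    using ordered[of p q] ordered[of q p] that by (cases "p < q") (auto simp: Int_commute)
  define I1 where "I1 = {i\<in>{..<k}. fst (T i) \<noteq> S}"
  define I2 where "I2 = {i\<in>{..<k}. fst (T i) = S}"
  have "I1 \<union> I2 = {..<k}" "I1 \<inter> I2 = {}" "finite I1" "finite I2"
    unfolding I1_def I2_def by auto
  then have "k = card I1 + card I2"
    by (metis card_Un_disjoint card_lessThan)
  moreover have "card I1 \<le> card V - card S"
    unfolding I1_def using assms(1,2) steiner disjoint
    by (intro card_supersets_meeting_in_le) (auto simp: steiner_tree_def)
  moreover have "2 * card I2 \<le> card S"
  proof (rule two_mult_card_le_if_edge_disjoint_trees[where F = "\<lambda>i. snd (T i)"])
    show "\<forall>i\<in>I2. is_tree S (snd (T i))"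
      using steiner unfolding I2_def steiner_tree_def by auto
    show "\<forall>i\<in>I2. \<forall>j\<in>I2. i \<noteq> j \<longrightarrow> snd (T i) \<inter> snd (T j) = {}"
      using disjoint unfolding I2_def by blast
  qed (use assms \<open>finite I2\<close> finite_subset in auto)
  ultimately show ?thesis
    by linarith
qed

definition independent_trees :: "'a set \<Rightarrow> 'a set \<times> 'a set set \<Rightarrow> 'a set \<times> 'a set set \<Rightarrow> bool" where
  "independent_trees S T T' \<longleftrightarrow> snd T \<inter> snd T' = {} \<and> fst T \<inter> fst T' = S \<and>
     branch_vertices (snd T) \<inter> branch_vertices (snd T') = {}"

lemma cis_familyI:
  assumes "\<forall>i<k. steiner_tree V E S (T i)"
    and independent: "\<forall>p q. p < q \<and> q < k \<longrightarrow> independent_trees S (T p) (T q)"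
  shows "cis_family V E S k T"
  unfolding cis_family_def
proof (intro conjI allI impI ballI)
  fix p q x1 x2 P Q
  assume pq: "p < q \<and> q < k"
    and paths: "is_path (fst (T p)) (snd (T p)) x1 x2 P \<and> is_path (fst (T q)) (snd (T q)) x1 x2 Q"
  have "interior P \<subseteq> branch_vertices (snd (T p))" "interior Q \<subseteq> branch_vertices (snd (T q))"
    using paths interior_subset_branch_vertices by fast+
  then show "interior P \<inter> interior Q = {}"
    using independent pq unfolding independent_trees_def by blast
qed (use assms in \<open>auto simp: independent_trees_def\<close>)

definition star :: "'a \<Rightarrow> 'a set \<Rightarrow> 'a set set" where
  "star v S = (\<lambda>x. {v, x}) ` S"

lemma branch_vertices_star: "branch_vertices (star v S) \<subseteq> {v}"
  by (auto simp: branch_vertices_def star_def doubleton_eq_iff)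

lemma tree_degree_star:
  assumes "v \<notin> S"
  shows "tree_degree (star v S) v = card S"
proof -
  have "inj_on (\<lambda>x. {v, x}) S"
    using assms by (auto intro!: inj_onI simp: doubleton_eq_iff)
  moreover have "{e \<in> star v S. v \<in> e} = star v S"
    by (auto simp: star_def)
  ultimately show ?thesis
    by (simp add: tree_degree_def star_def card_image)
qed

lemma is_tree_star:
  assumes "finite S" "v \<notin> S"
  shows "is_tree (insert v S) (star v S)"
proof (rule is_treeI[where c = v])
  show "\<forall>e\<in>star v S. card e = 2 \<and> e \<subseteq> insert v S"
    using assms(2) by (auto simp: star_def card_insert_if)
  show "\<forall>x\<in>insert v S. \<exists>p. walk (insert v S) (star v S) p \<and> hd p = x \<and> last p = v"
  proof
    fix x assume "x \<in> insert v S"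
    then have "walk (insert v S) (star v S) (if x = v then [v] else [x, v])"
      by (auto simp: walk_def star_def insert_commute)
    then show "\<exists>p. walk (insert v S) (star v S) p \<and> hd p = x \<and> last p = v"
      by (intro exI) auto
  qed
  show "card (branch_vertices (star v S)) \<le> 2"
    using card_mono[OF _ branch_vertices_star, of v S] by simp
qed (use assms in auto)

(* The vertices t < s are paired as {2 i, 2 i + 1}. An edge goes to the double star of the pair
   with the smaller index if its ends have equal parity, and of the larger one otherwise; then every
   vertex outside pair i has exactly one neighbour in double star i, which lies in pair i. *)
definition double_star_index :: "nat \<Rightarrow> nat \<Rightarrow> nat" where
  "double_star_index t u =
     (if even (t + u) then min (t div 2) (u div 2) else max (t div 2) (u div 2))"

definition double_star :: "nat \<Rightarrow> nat \<Rightarrow> nat set set" where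
  "double_star s i = {{t, u} | t u. t < s \<and> u < s \<and> t \<noteq> u \<and> double_star_index t u = i}"

lemma double_star_index_commute: "double_star_index t u = double_star_index u t"
  by (simp add: double_star_index_def add.commute min.commute max.commute)

lemma doubleton_mem_double_star_iff:
  "{t, u} \<in> double_star s i \<longleftrightarrow> t < s \<and> u < s \<and> t \<noteq> u \<and> double_star_index t u = i"
  by (auto simp: double_star_def doubleton_eq_iff double_star_index_commute)

lemma double_star_disjoint: "i \<noteq> j \<Longrightarrow> double_star s i \<inter> double_star s j = {}"
  by (auto simp: double_star_def doubleton_eq_iff double_star_index_commute)

lemma double_star_edges: "e \<in> double_star s i \<Longrightarrow> card e = 2 \<and> e \<subseteq> {..<s}"
  by (auto simp: double_star_def)

lemma div_2_eq_if_double_star_index_eq: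
  assumes "double_star_index t u = i" "double_star_index t v = i" "u \<noteq> v"
  shows "t div 2 = i"
proof (rule ccontr)
  assume "t div 2 \<noteq> i"
  then have "u div 2 = i" "v div 2 = i"
    using assms(1,2) by (auto simp: double_star_index_def min_def max_def split: if_splits)
  then have "even (t + u) \<noteq> even (t + v)"
    using \<open>u \<noteq> v\<close> by (metis div_mult_mod_eq even_add even_iff_mod_2_eq_zero odd_iff_mod_2_eq_one)
  then show False
    using assms(1,2) \<open>t div 2 \<noteq> i\<close> \<open>u div 2 = i\<close> \<open>v div 2 = i\<close>
    by (auto simp: double_star_index_def split: if_splits)
qed

lemma branch_vertices_double_star: "branch_vertices (double_star s i) \<subseteq> {2 * i, Suc (2 * i)}"
proof
  fix a assume "a \<in> branch_vertices (double_star s i)"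
  then obtain b c where "b \<noteq> c" "{a, b} \<in> double_star s i" "{a, c} \<in> double_star s i"
    unfolding branch_vertices_def by blast
  then have "a div 2 = i"
    by (intro div_2_eq_if_double_star_index_eq[of a b i c]) (simp_all add: doubleton_mem_double_star_iff)
  then show "a \<in> {2 * i, Suc (2 * i)}"
    by auto
qed

lemma walk_to_double_star_centre:
  assumes "i < s div 2" "t < s"
  shows "\<exists>p. walk {..<s} (double_star s i) p \<and> hd p = t \<and> last p = 2 * i"
proof -
  define u where "u = 2 * i + (if i < t div 2 then t mod 2 else 1 - t mod 2)"
  have "u div 2 = i" "even (t + u) \<longleftrightarrow> i < t div 2"
    by (auto simp: u_def)
  moreover have "Suc (2 * i) < s"
    using assms(1) by presburger
  ultimately have "{t, u} \<in> double_star s i" "{Suc (2 * i), 2 * i} \<in> double_star s i"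
    using assms(2) by (auto simp: doubleton_mem_double_star_iff double_star_index_def)
  moreover have "u = 2 * i \<or> u = Suc (2 * i)"
    using \<open>u div 2 = i\<close> by auto
  ultimately have "walk {..<s} (double_star s i) (if u = 2 * i then [t, u] else [t, u, 2 * i])"
    using \<open>Suc (2 * i) < s\<close> assms(2) by (auto simp: walk_def)
  then show ?thesis
    by (intro exI) auto
qed

lemma double_star_image:
  assumes h: "inj_on h {..<s}" and i: "i < s div 2"
  shows "is_tree (h ` {..<s}) ((`) h ` double_star s i)"
    and "branch_vertices ((`) h ` double_star s i) \<subseteq> {h (2 * i), h (Suc (2 * i))}"
proof -
  have "inj_on h (\<Union>(double_star s i))"
    using h double_star_edges by (blast intro: inj_on_subset)
  then show branch: "branch_vertices ((`) h ` double_star s i) \<subseteq> {h (2 * i), h (Suc (2 * i))}"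
    using branch_vertices_image branch_vertices_double_star by fastforce
  show "is_tree (h ` {..<s}) ((`) h ` double_star s i)"
  proof (rule is_treeI[where c = "h (2 * i)"])
    show "\<forall>e\<in>(`) h ` double_star s i. card e = 2 \<and> e \<subseteq> h ` {..<s}"
    proof
      fix e assume "e \<in> (`) h ` double_star s i"
      then obtain e' where "e' \<in> double_star s i" "e = h ` e'"
        by blast
      then show "card e = 2 \<and> e \<subseteq> h ` {..<s}"
        using double_star_edges[of e' s i] h by (auto simp: card_image inj_on_subset)
    qed
    show "\<forall>x\<in>h ` {..<s}. \<exists>p. walk (h ` {..<s}) ((`) h ` double_star s i) p \<and> hd p = x \<and> last p = h (2 * i)"
    proof
      fix x assume "x \<in> h ` {..<s}"
      then obtain t where "t < s" "x = h t"
        by blast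
      then obtain p where "walk {..<s} (double_star s i) p" "hd p = t" "last p = 2 * i"
        using walk_to_double_star_centre[OF i] by blast
      then show "\<exists>p. walk (h ` {..<s}) ((`) h ` double_star s i) p \<and> hd p = x \<and> last p = h (2 * i)"
        using walk_map \<open>x = h t\<close> by (intro exI[of _ "map h p"]) (auto simp: walk_def hd_map last_map)
    qed
    show "card (branch_vertices ((`) h ` double_star s i)) \<le> 2"
      using card_mono[OF _ branch] by (simp add: card_insert_if le_trans)
  qed (use i in auto)
qed

lemma mem_Kn_E_iff: "e \<in> Kn_E n \<longleftrightarrow> e \<subseteq> {..<n} \<and> card e = 2"
  by (auto simp: Kn_E_def card_2_iff)

lemma steiner_tree_Kn_double_star:
  assumes "inj_on h {..<s}" "h ` {..<s} \<subseteq> {..<n}" "i < s div 2"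
  shows "steiner_tree (Kn_V n) (Kn_E n) (h ` {..<s}) (h ` {..<s}, (`) h ` double_star s i)"
proof -
  have "is_tree (h ` {..<s}) ((`) h ` double_star s i)"
    using double_star_image(1)[OF assms(1,3)] .
  then show ?thesis
    using assms(2) unfolding steiner_tree_def is_tree_def by (auto simp: Kn_V_def mem_Kn_E_iff)
qed

lemma steiner_tree_Kn_star:
  assumes "S \<subseteq> {..<n}" "v < n" "v \<notin> S" "2 \<le> card S"
  shows "steiner_tree (Kn_V n) (Kn_E n) S (insert v S, star v S)"
proof -
  have "is_tree (insert v S) (star v S)"
    using assms by (intro is_tree_star) (auto intro: finite_subset)
  moreover have "tree_degree (star v S) v \<noteq> 1"
    using assms(3,4) by (simp add: tree_degree_star)
  moreover have "star v S \<subseteq> Kn_E n"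
    using assms(1-3) by (auto simp: star_def mem_Kn_E_iff card_insert_if)
  ultimately show ?thesis
    using assms(1,2) unfolding steiner_tree_def by (auto simp: Kn_V_def)
qed

lemma double_star_images_disjoint:
  assumes "inj_on h {..<s}" "i \<noteq> j"
  shows "(`) h ` double_star s i \<inter> (`) h ` double_star s j = {}"
proof -
  have "double_star s i \<subseteq> Pow {..<s}" "double_star s j \<subseteq> Pow {..<s}"
    using double_star_edges by blast+
  then show ?thesis
    using inj_on_image_Int[OF inj_on_image_Pow[OF assms(1)]] double_star_disjoint[OF assms(2)]
    by (metis image_empty)
qed

lemma independent_double_star_images:
  assumes h: "inj_on h {..<s}" and "i < s div 2" "j < s div 2" "i \<noteq> j"
  shows "independent_trees (h ` {..<s})
    (h ` {..<s}, (`) h ` double_star s i) (h ` {..<s}, (`) h ` double_star s j)"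
proof -
  have "2 * i < s" "Suc (2 * i) < s" "2 * j < s" "Suc (2 * j) < s"
    using assms(2,3) by auto
  then have "{h (2 * i), h (Suc (2 * i))} \<inter> {h (2 * j), h (Suc (2 * j))} = {}"
    using h \<open>i \<noteq> j\<close> by (auto simp: inj_on_eq_iff)
  then show ?thesis
    using double_star_images_disjoint[OF h \<open>i \<noteq> j\<close>]
      double_star_image(2)[OF h \<open>i < s div 2\<close>] double_star_image(2)[OF h \<open>j < s div 2\<close>]
    unfolding independent_trees_def by auto
qed

lemma independent_double_star_image_star:
  assumes h: "inj_on h {..<s}" and i: "i < s div 2" and w: "w \<notin> h ` {..<s}"
  shows "independent_trees (h ` {..<s})
    (h ` {..<s}, (`) h ` double_star s i) (insert w (h ` {..<s}), star w (h ` {..<s}))"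
proof -
  have "e \<subseteq> h ` {..<s}" if "e \<in> (`) h ` double_star s i" for e
    using that double_star_edges by blast
  moreover have "w \<in> e" if "e \<in> star w (h ` {..<s})" for e
    using that by (auto simp: star_def)
  moreover have "branch_vertices ((`) h ` double_star s i) \<subseteq> h ` {..<s}"
    using double_star_image(2)[OF h i] i by auto
  ultimately show ?thesis
    using w branch_vertices_star[of w "h ` {..<s}"] unfolding independent_trees_def by auto
qed

lemma independent_stars:
  assumes "u \<notin> S" "w \<notin> S" "u \<noteq> w"
  shows "independent_trees S (insert u S, star u S) (insert w S, star w S)"
proof -
  have "star u S \<inter> star w S = {}"
    using assms by (auto simp: star_def doubleton_eq_iff)
  then show ?thesis
    using assms branch_vertices_star[of u S] branch_vertices_star[of w S]
    unfolding independent_trees_def by auto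
qed

definition stars_and_double_stars :: "nat \<Rightarrow> (nat \<Rightarrow> 'a) \<Rightarrow> (nat \<Rightarrow> 'a) \<Rightarrow> nat \<Rightarrow> 'a set \<times> 'a set set" where
  "stars_and_double_stars s h g j =
     (if j < s div 2 then (h ` {..<s}, (`) h ` double_star s j)
      else (insert (g (j - s div 2)) (h ` {..<s}), star (g (j - s div 2)) (h ` {..<s})))"

lemma steiner_tree_stars_and_double_stars:
  assumes h: "inj_on h {..<s}" "h ` {..<s} \<subseteq> {..<n}" and "2 \<le> s"
    and g: "g ` {..<N} \<subseteq> {..<n} - h ` {..<s}" and j: "j < s div 2 + N"
  shows "steiner_tree (Kn_V n) (Kn_E n) (h ` {..<s}) (stars_and_double_stars s h g j)"
proof (cases "j < s div 2")
  case True
  then show ?thesis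
    using steiner_tree_Kn_double_star[OF h] by (simp add: stars_and_double_stars_def)
next
  case False
  then have "j - s div 2 < N"
    using j by linarith
  then have "g (j - s div 2) \<in> {..<n} - h ` {..<s}"
    using g by blast
  moreover have "card (h ` {..<s}) = s"
    using h(1) by (simp add: card_image)
  ultimately show ?thesis
    using False steiner_tree_Kn_star[OF h(2)] \<open>2 \<le> s\<close> by (simp add: stars_and_double_stars_def)
qed

lemma independent_stars_and_double_stars:
  assumes h: "inj_on h {..<s}" and g: "inj_on g {..<N}" "g ` {..<N} \<inter> h ` {..<s} = {}"
    and "p < q" "q < s div 2 + N"
  shows "independent_trees (h ` {..<s}) (stars_and_double_stars s h g p) (stars_and_double_stars s h g q)"
proof -
  let ?m = "s div 2"
  consider "q < ?m" | "p < ?m" "?m \<le> q" | "?m \<le> p"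
    by linarith
  then show ?thesis
  proof cases
    case 1
    then show ?thesis
      using independent_double_star_images[OF h, of p q] \<open>p < q\<close>
      by (simp add: stars_and_double_stars_def)
  next
    case 2
    then have "q - ?m < N"
      using \<open>q < ?m + N\<close> by linarith
    then have "g (q - ?m) \<notin> h ` {..<s}"
      using g(2) by blast
    then show ?thesis
      using 2 independent_double_star_image_star[OF h 2(1)] by (simp add: stars_and_double_stars_def)
  next
    case 3
    then have "p - ?m < N" "q - ?m < N" "p - ?m \<noteq> q - ?m"
      using \<open>p < q\<close> \<open>q < ?m + N\<close> by linarith+
    then have "g (p - ?m) \<noteq> g (q - ?m)" "g (p - ?m) \<notin> h ` {..<s}" "g (q - ?m) \<notin> h ` {..<s}"
      using g by (auto simp: inj_on_eq_iff)
    then show ?thesis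
      using 3 \<open>p < q\<close> independent_stars by (simp add: stars_and_double_stars_def)
  qed
qed

lemma ex_cis_family_Kn:
  assumes S: "S \<subseteq> {..<n}" and two: "2 \<le> card S"
  shows "\<exists>T. cis_family (Kn_V n) (Kn_E n) S (card S div 2 + (n - card S)) T"
proof -
  define s where "s = card S"
  have "finite S"
    using S finite_subset by blast
  then obtain h where "bij_betw h {..<s} S"
    using ex_bij_betw_nat_finite by (fastforce simp: s_def atLeast0LessThan)
  then have h: "inj_on h {..<s}" and hS: "h ` {..<s} = S"
    by (auto simp: bij_betw_def)
  have "card ({..<n} - S) = n - s"
    using S \<open>finite S\<close> by (simp add: card_Diff_subset s_def)
  then obtain g where "bij_betw g {..<n - s} ({..<n} - S)"
    using ex_bij_betw_nat_finite[of "{..<n} - S"] by (auto simp: atLeast0LessThan)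
  then have g: "inj_on g {..<n - s}" "g ` {..<n - s} = {..<n} - S"
    by (auto simp: bij_betw_def)
  have "2 \<le> s"
    using two by (simp add: s_def)
  have "cis_family (Kn_V n) (Kn_E n) S (s div 2 + (n - s)) (stars_and_double_stars s h g)"
  proof (rule cis_familyI)
    show "\<forall>j<s div 2 + (n - s). steiner_tree (Kn_V n) (Kn_E n) S (stars_and_double_stars s h g j)"
      using steiner_tree_stars_and_double_stars[OF h, unfolded hS, OF S \<open>2 \<le> s\<close>, of g "n - s"] g(2) by simp
    show "\<forall>p q. p < q \<and> q < s div 2 + (n - s) \<longrightarrow>
        independent_trees S (stars_and_double_stars s h g p) (stars_and_double_stars s h g q)"
      using independent_stars_and_double_stars[OF h g(1), unfolded hS] g(2) by blast
  qed
  then show ?thesis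
    unfolding s_def by blast
qed

lemma kappa_star_eqI:
  assumes "cis_family V E S k T" and le: "\<And>k' T'. cis_family V E S k' T' \<Longrightarrow> k' \<le> k"
  shows "kappa_star V E S = k"
proof -
  have "finite {k. \<exists>T. cis_family V E S k T}"
    using le by (auto simp: finite_nat_set_iff_bounded_le)
  then show ?thesis
    unfolding kappa_star_def using assms by (intro Max_eqI) auto
qed

lemma kappa_star_Kn:
  assumes "S \<subseteq> Kn_V n" "2 \<le> card S"
  shows "kappa_star (Kn_V n) (Kn_E n) S = card S div 2 + (n - card S)"
proof -
  have "S \<subseteq> {..<n}"
    using assms(1) by (simp add: Kn_V_def)
  then obtain T where "cis_family (Kn_V n) (Kn_E n) S (card S div 2 + (n - card S)) T"
    using ex_cis_family_Kn assms(2) by blast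
  then show ?thesis
  proof (rule kappa_star_eqI)
    fix k T' assume "cis_family (Kn_V n) (Kn_E n) S k T'"
    then have "k \<le> (card (Kn_V n) - card S) + card S div 2"
      by (intro cis_family_le[OF _ assms]) (simp add: Kn_V_def)
    then show "k \<le> card S div 2 + (n - card S)"
      by (simp add: Kn_V_def)
  qed
qed

lemma nat_ceiling_half: "nat \<lceil>real s / 2\<rceil> = s - s div 2"
proof (cases "even s")
  case True
  then show ?thesis
    by (auto elim!: evenE)
next
  case False
  then obtain q where q: "s = 2 * q + 1"
    using oddE by blast
  then have "real s / 2 = real q + 1 / 2"
    by simp
  then have "\<lceil>real s / 2\<rceil> = int q + 1"
    by (simp add: ceiling_eq_iff)
  then show ?thesis
    using q by simp
qed

theorem corollary2p7:
  fixes n s :: nat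
  assumes "2 \<le> s" and "s \<le> n" and "4 \<le> n"
  shows "kappa_s (Kn_V n) (Kn_E n) s = n - nat \<lceil>real s / 2\<rceil>"
proof -
  have "kappa_star (Kn_V n) (Kn_E n) S = s div 2 + (n - s)" if "S \<subseteq> Kn_V n" "card S = s" for S
    using kappa_star_Kn that \<open>2 \<le> s\<close> by simp
  moreover have "{..<s} \<subseteq> Kn_V n" "card {..<s} = s"
    using \<open>s \<le> n\<close> by (auto simp: Kn_V_def)
  ultimately have "{kappa_star (Kn_V n) (Kn_E n) S | S. S \<subseteq> Kn_V n \<and> card S = s} = {s div 2 + (n - s)}"
    by (auto intro!: exI[of _ "{..<s}"])
  then show ?thesis
    unfolding kappa_s_def nat_ceiling_half using \<open>s \<le> n\<close> by simp
qed

end
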